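(* Let $z^{(0)}\in\mathbb C^m$ with $z^{(0)}_1\cdots z^{(0)}_m R(z^{(0)})\ne0$, and let $\bar M_1,\dots,\bar M_m\in\mathbb C[\xi_1,\dots,\xi_m]$ be the polynomials obtained by substituting $z=z^{(0)}$ in $M_1,\dots,M_m$. Then (1) $\bar M_1,\dots,\bar M_m$ form a regular sequence in $\mathbb C[\xi_1,\dots,\xi_m]$; in particular multiplication by $\bar M_m$ on $\mathbb C[\xi]/(\bar M_1,\dots,\bar M_{m-1})$ is injective and homogeneous of degree $p$; (2) the degree-$d$ part of $\mathbb C[\xi]/(\bar M_1,\dots,\bar M_{m-1})$ has dimension $r_{m-1,d}$, where $\sum_{d\ge0}r_{m-1,d}t^d=\frac{(1-t^p)^{m-1}}{(1-t)^m}$.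
   Context: $R(z)=\prod_{(i_1,\dots,i_m)\in\{1,\dots,p\}^m}(1-\zeta_p^{i_1}z_1-\cdots-\zeta_p^{i_m}z_m)$, $\zeta_p=e^{2\pi\sqrt{-1}/p}$. $M_k=\xi_k^p-\xi_m^p$ for $1\le k\le m-1$ and $M_m=\xi_m^p-\big(\sum_{j=1}^m z_j\xi_j\big)^p$. *)

theory Defs
  imports Complex_Main "HOL-Library.Poly_Mapping" "HOL-Library.FuncSet"
    "HOL-Computational_Algebra.Formal_Power_Series"
begin

text \<open>Variable xi_(i+1) of the paper is index i (0-based), i < m.\<close>

type_synonym cpoly = "(nat \<Rightarrow>\<^sub>0 nat) \<Rightarrow>\<^sub>0 complex"

definition pvar :: "nat \<Rightarrow> cpoly" where
  "pvar i = Poly_Mapping.single (Poly_Mapping.single i 1) 1"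

definition pconst :: "complex \<Rightarrow> cpoly" where
  "pconst c = Poly_Mapping.single 0 c"

definition cscale :: "complex \<Rightarrow> cpoly \<Rightarrow> cpoly" where
  "cscale c f = Poly_Mapping.map (\<lambda>x. c * x) f"

definition in_vars :: "nat \<Rightarrow> cpoly \<Rightarrow> bool" where
  "in_vars m f \<longleftrightarrow> (\<forall>\<alpha>::nat \<Rightarrow>\<^sub>0 nat\<in>Poly_Mapping.keys f. Poly_Mapping.keys \<alpha> \<subseteq> {..<m})"

definition mdeg :: "(nat \<Rightarrow>\<^sub>0 nat) \<Rightarrow> nat" where
  "mdeg \<alpha> = (\<Sum>i\<in>Poly_Mapping.keys \<alpha>. Poly_Mapping.lookup \<alpha> i)"

text \<open>Homogeneous of degree d (the zero polynomial counts as homogeneous of every degree).\<close>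
definition homog :: "nat \<Rightarrow> cpoly \<Rightarrow> bool" where
  "homog d f \<longleftrightarrow> (\<forall>\<alpha>\<in>Poly_Mapping.keys f. mdeg \<alpha> = d)"

definition gen_ideal :: "nat \<Rightarrow> cpoly list \<Rightarrow> cpoly set" where
  "gen_ideal m gs = {f. \<exists>h. (\<forall>i<length gs. in_vars m (h i)) \<and>
                          f = (\<Sum>i<length gs. h i * gs ! i)}"

definition regular_sequence :: "nat \<Rightarrow> cpoly list \<Rightarrow> bool" where
  "regular_sequence m gs \<longleftrightarrow>
     (\<forall>k<length gs. \<forall>f. in_vars m f \<and> f * gs ! k \<in> gen_ideal m (take k gs)
                         \<longrightarrow> f \<in> gen_ideal m (take k gs))
     \<and> 1 \<notin> gen_ideal m gs"

definition zeta :: "nat \<Rightarrow> complex" where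
  "zeta p = cis (2 * pi / real p)"

definition Rval :: "nat \<Rightarrow> nat \<Rightarrow> (nat \<Rightarrow> complex) \<Rightarrow> complex" where
  "Rval p m z = (\<Prod>\<iota>\<in>({..<m} \<rightarrow>\<^sub>E {1..p}). 1 - (\<Sum>j<m. zeta p ^ \<iota> j * z j))"

text \<open>The specialised polynomials Mbar_1..Mbar_m (list index k corresponds to M_(k+1)).\<close>
definition Mbar :: "nat \<Rightarrow> nat \<Rightarrow> (nat \<Rightarrow> complex) \<Rightarrow> nat \<Rightarrow> cpoly" where
  "Mbar p m z k = (if k < m - 1 then pvar k ^ p - pvar (m - 1) ^ p
                   else pvar (m - 1) ^ p - (\<Sum>j<m. pconst (z j) * pvar j) ^ p)"

definition Mbars :: "nat \<Rightarrow> nat \<Rightarrow> (nat \<Rightarrow> complex) \<Rightarrow> cpoly list" where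
  "Mbars p m z = map (Mbar p m z) [0..<m]"

definition homog_part :: "nat \<Rightarrow> nat \<Rightarrow> cpoly set" where
  "homog_part m d = {f. in_vars m f \<and> homog d f}"

definition quot_dim :: "nat \<Rightarrow> cpoly set \<Rightarrow> nat \<Rightarrow> nat" where
  "quot_dim m I d = vector_space.dim cscale (homog_part m d)
                    - vector_space.dim cscale (homog_part m d \<inter> I)"

definition rcoef :: "nat \<Rightarrow> nat \<Rightarrow> nat \<Rightarrow> rat" where
  "rcoef p m d = fps_nth ((1 - fps_X ^ p) ^ (m - 1) / (1 - fps_X) ^ m) d"

end

theory Submission
  imports Defs
begin

text \<open>Write n for the last variable, so that m = n + 1, and let I_k be the ideal generated by
  the binomials \<xi>_j^p - \<xi>_n^p with j < k \<le> n. For every i \<in> {0..p-1}^k the substitution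
  \<xi>_j \<mapsto> \<zeta>^(i_j) \<xi>_n (j < k) is a ring homomorphism killing I_k. Conversely, modulo I_k every
  polynomial is congruent to one whose exponents in \<xi>_0, ..., \<xi>_(k-1) are all below p, and such a
  reduced polynomial is recovered from its p^k substitutions by a discrete Fourier transform. Hence
  I_k is the intersection of the kernels of these substitutions. Their images lie in the domain
  \<complex>[\<xi>], and none of them kills M_(k+1): for k < n it is left unchanged, and for k = n it becomes
  (1 - w^p) \<xi>_n^p, where w^p = 1 would make a factor of R(z) vanish. This gives regularity. The
  non-reduced monomials \<xi>^\<alpha> give the basis \<xi>^\<alpha> - \<xi>^(reduce \<alpha>) of the degree-d part of I_n, so
  the Hilbert function of \<complex>[\<xi>]/I_n counts monomials with n exponents below p and one unrestricted
  exponent; their generating function is (1 + t + ... + t^(p-1))^n / (1 - t).\<close>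

abbreviation lookup :: "('a \<Rightarrow>\<^sub>0 'b::zero) \<Rightarrow> 'a \<Rightarrow> 'b" where
  "lookup \<equiv> Poly_Mapping.lookup"
abbreviation keys :: "('a \<Rightarrow>\<^sub>0 'b::zero) \<Rightarrow> 'a set" where
  "keys \<equiv> Poly_Mapping.keys"
abbreviation single :: "'a \<Rightarrow> 'b \<Rightarrow> ('a \<Rightarrow>\<^sub>0 'b::zero)" where
  "single \<equiv> Poly_Mapping.single"

definition monomial :: "(nat \<Rightarrow>\<^sub>0 nat) \<Rightarrow> cpoly" where
  "monomial \<alpha> = single \<alpha> 1"

lemma monomial_mult: "monomial \<alpha> * monomial \<beta> = monomial (\<alpha> + \<beta>)"
  by (simp add: monomial_def mult_single)

lemma lookup_monomial: "lookup (monomial \<beta>) \<alpha> = (if \<beta> = \<alpha> then 1 else 0)"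
  by (simp add: monomial_def lookup_single when_def)

lemma inj_monomial: "inj monomial"
  by (rule injI) (metis lookup_monomial one_neq_zero)

lemma pvar_eq_monomial: "pvar j = monomial (single j 1)"
  by (simp add: pvar_def monomial_def)

lemma pvar_power: "pvar j ^ e = monomial (single j e)"
  by (induction e) (simp_all add: pvar_eq_monomial monomial_mult single_add[symmetric],
      simp add: monomial_def)

lemma single_eq_pconst_mult: "single \<alpha> c = pconst c * monomial \<alpha>"
  by (simp add: pconst_def monomial_def mult_single)

lemma pconst_eq_0_iff: "pconst c = 0 \<longleftrightarrow> c = 0"
  by (metis pconst_def lookup_single_eq lookup_zero single_zero)

lemma monomial_neq_0: "monomial \<alpha> \<noteq> 0"
  by (metis lookup_monomial lookup_zero one_neq_zero)

lemma cscale_eq_pconst_mult: "cscale c f = pconst c * f"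
  by (simp add: cscale_def pconst_def mult_map_scale_conv_mult)

lemma lookup_cscale: "lookup (cscale c f) \<alpha> = c * lookup f \<alpha>"
  by (simp add: cscale_def map.rep_eq when_def)

lemma pconst_mult: "pconst a * pconst b = pconst (a * b)"
  by (simp add: pconst_def mult_single)

lemma pconst_add: "pconst a + pconst b = pconst (a + b)"
  by (simp add: pconst_def single_add)

lemma pconst_diff: "pconst a - pconst b = pconst (a - b)"
  by (simp add: pconst_def single_diff)

lemma pconst_one: "pconst 1 = 1"
  by (simp add: pconst_def)

lemma pconst_power: "pconst a ^ e = pconst (a ^ e)"
  by (induction e) (simp_all add: pconst_one pconst_mult)

lemma pconst_sum: "pconst (\<Sum>x\<in>A. f x) = (\<Sum>x\<in>A. pconst (f x))"
  by (induction A rule: infinite_finite_induct) (simp_all add: pconst_def single_add)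

lemma poly_eq_sum_single: "f = (\<Sum>\<alpha>\<in>keys f. single \<alpha> (lookup f \<alpha>))"
proof (rule poly_mapping_eqI)
  fix \<beta>
  show "lookup f \<beta> = lookup (\<Sum>\<alpha>\<in>keys f. single \<alpha> (lookup f \<alpha>)) \<beta>"
    by (cases "\<beta> \<in> keys f") (auto simp: lookup_sum lookup_single when_def in_keys_iff)
qed

lemma poly_eq_sum_cscale_monomial: "f = (\<Sum>\<alpha>\<in>keys f. cscale (lookup f \<alpha>) (monomial \<alpha>))"
  by (subst poly_eq_sum_single) (simp add: single_eq_pconst_mult cscale_eq_pconst_mult)

lemma mult_eq_sum_single:
  "(f::cpoly) * g = (\<Sum>\<alpha>\<in>keys f. \<Sum>\<beta>\<in>keys g. single (\<alpha> + \<beta>) (lookup f \<alpha> * lookup g \<beta>))"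
proof -
  have "f * g = (\<Sum>\<alpha>\<in>keys f. single \<alpha> (lookup f \<alpha>)) * (\<Sum>\<beta>\<in>keys g. single \<beta> (lookup g \<beta>))"
    using poly_eq_sum_single by metis
  then show ?thesis by (simp add: sum_product mult_single)
qed

lemma keys_add_exponents: "keys ((\<alpha>::nat \<Rightarrow>\<^sub>0 nat) + \<beta>) = keys \<alpha> \<union> keys \<beta>"
  by (auto simp: in_keys_iff lookup_add)

lemma in_vars_add: "in_vars m f \<Longrightarrow> in_vars m g \<Longrightarrow> in_vars m (f + g)"
  unfolding in_vars_def using keys_add[of f g] by blast

lemma in_vars_diff: "in_vars m f \<Longrightarrow> in_vars m g \<Longrightarrow> in_vars m (f - g)"
  using in_vars_add[of m f "- g"] by (simp add: in_vars_def)

lemma in_vars_mult: "in_vars m f \<Longrightarrow> in_vars m g \<Longrightarrow> in_vars m (f * g)"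
  unfolding in_vars_def using keys_mult[of f g] by (fastforce simp: keys_add_exponents)

lemma in_vars_single: "keys \<alpha> \<subseteq> {..<m} \<Longrightarrow> in_vars m (single \<alpha> c)"
  by (simp add: in_vars_def)

lemma in_vars_monomial: "keys \<alpha> \<subseteq> {..<m} \<Longrightarrow> in_vars m (monomial \<alpha>)"
  by (simp add: monomial_def in_vars_single)

lemma in_vars_pconst: "in_vars m (pconst c)"
  by (simp add: pconst_def in_vars_single)

lemma mdeg_eq_sum_superset: "finite S \<Longrightarrow> keys \<alpha> \<subseteq> S \<Longrightarrow> mdeg \<alpha> = (\<Sum>i\<in>S. lookup \<alpha> i)"
  unfolding mdeg_def by (intro sum.mono_neutral_left) (auto simp: in_keys_iff)

lemma mdeg_add: "mdeg (\<alpha> + \<beta>) = mdeg \<alpha> + mdeg \<beta>"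
proof -
  let ?S = "keys \<alpha> \<union> keys \<beta>"
  have "mdeg (\<alpha> + \<beta>) = (\<Sum>i\<in>?S. lookup (\<alpha> + \<beta>) i)"
    by (rule mdeg_eq_sum_superset) (auto simp: keys_add_exponents)
  also have "\<dots> = (\<Sum>i\<in>?S. lookup \<alpha> i) + (\<Sum>i\<in>?S. lookup \<beta> i)"
    by (simp add: lookup_add sum.distrib)
  finally show ?thesis using mdeg_eq_sum_superset[of ?S] by auto
qed

lemma mdeg_single [simp]: "mdeg (single i e) = e"
  by (cases "e = 0") (simp_all add: mdeg_def)

lemma mdeg_zero [simp]: "mdeg 0 = 0"
  by (simp add: mdeg_def)

lemma lookup_le_mdeg: "lookup \<alpha> i \<le> mdeg \<alpha>"
  by (cases "i \<in> keys \<alpha>") (auto simp: mdeg_def in_keys_iff intro: member_le_sum)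

lemma finite_exponents_of_mdeg:
  assumes "finite S"
  shows "finite {\<alpha>::nat \<Rightarrow>\<^sub>0 nat. keys \<alpha> \<subseteq> S \<and> mdeg \<alpha> = d}"
proof -
  let ?A = "{\<alpha>::nat \<Rightarrow>\<^sub>0 nat. keys \<alpha> \<subseteq> S \<and> mdeg \<alpha> = d}"
  have "inj_on (\<lambda>\<alpha>. restrict (lookup \<alpha>) S) ?A"
  proof (rule inj_onI, rule poly_mapping_eqI)
    fix \<alpha> \<beta> t
    assume "\<alpha> \<in> ?A" "\<beta> \<in> ?A" and eq: "restrict (lookup \<alpha>) S = restrict (lookup \<beta>) S"
    then have "keys \<alpha> \<subseteq> S" "keys \<beta> \<subseteq> S" by auto
    then show "lookup \<alpha> t = lookup \<beta> t"
      using fun_cong[OF eq, of t] by (cases "t \<in> S") (simp, metis in_keys_iff subsetD)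
  qed
  moreover have "(\<lambda>\<alpha>. restrict (lookup \<alpha>) S) ` ?A \<subseteq> PiE S (\<lambda>_. {..d})"
    using lookup_le_mdeg by (auto simp: PiE_iff)
  then have "finite ((\<lambda>\<alpha>. restrict (lookup \<alpha>) S) ` ?A)"
    by (rule finite_subset) (simp add: assms finite_PiE)
  ultimately show ?thesis using finite_imageD by blast
qed

lemma homog_add: "homog d f \<Longrightarrow> homog d g \<Longrightarrow> homog d (f + g)"
  unfolding homog_def using keys_add[of f g] by blast

lemma homog_diff: "homog d f \<Longrightarrow> homog d g \<Longrightarrow> homog d (f - g)"
  using homog_add[of d f "- g"] by (simp add: homog_def)

lemma homog_mult: "homog d f \<Longrightarrow> homog e g \<Longrightarrow> homog (d + e) (f * g)"
  unfolding homog_def using keys_mult[of f g] by (fastforce simp: mdeg_add)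

lemma homog_sum: "(\<And>x. x \<in> A \<Longrightarrow> homog d (F x)) \<Longrightarrow> homog d (\<Sum>x\<in>A. F x)"
  by (induction A rule: infinite_finite_induct) (auto simp: homog_def[of d 0] intro: homog_add)

lemma homog_single: "mdeg \<alpha> = d \<Longrightarrow> homog d (single \<alpha> c)"
  by (simp add: homog_def)

lemma homog_monomial: "mdeg \<alpha> = d \<Longrightarrow> homog d (monomial \<alpha>)"
  by (simp add: monomial_def homog_single)

lemma homog_power: "homog d f \<Longrightarrow> homog (e * d) (f ^ e)"
proof (induction e)
  case 0
  show ?case by (simp add: homog_def)
next
  case (Suc e)
  then show ?case using homog_mult[of d f "e * d" "f ^ e"] by (simp add: add.commute)
qed

lemma constant_coeff_homog: "0 < d \<Longrightarrow> homog d f \<Longrightarrow> lookup f 0 = 0"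
  unfolding homog_def by (metis in_keys_iff less_irrefl mdeg_zero)

lemma gen_ideal_zero: "0 \<in> gen_ideal m gs"
  unfolding gen_ideal_def by (auto intro: exI[of _ "\<lambda>_. 0"] simp: in_vars_def)

lemma gen_ideal_add: "f \<in> gen_ideal m gs \<Longrightarrow> g \<in> gen_ideal m gs \<Longrightarrow> f + g \<in> gen_ideal m gs"
proof -
  assume "f \<in> gen_ideal m gs" "g \<in> gen_ideal m gs"
  then obtain h h' where "\<forall>i<length gs. in_vars m (h i)" "f = (\<Sum>i<length gs. h i * gs ! i)"
    and "\<forall>i<length gs. in_vars m (h' i)" "g = (\<Sum>i<length gs. h' i * gs ! i)"
    unfolding gen_ideal_def by auto
  then show ?thesis unfolding gen_ideal_def
    by (auto intro!: exI[of _ "\<lambda>i. h i + h' i"] in_vars_add simp: distrib_right sum.distrib)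
qed

lemma gen_ideal_mult: "in_vars m q \<Longrightarrow> f \<in> gen_ideal m gs \<Longrightarrow> q * f \<in> gen_ideal m gs"
proof -
  assume q: "in_vars m q" and "f \<in> gen_ideal m gs"
  then obtain h where "\<forall>i<length gs. in_vars m (h i)" "f = (\<Sum>i<length gs. h i * gs ! i)"
    unfolding gen_ideal_def by auto
  with q show ?thesis unfolding gen_ideal_def
    by (auto intro!: exI[of _ "\<lambda>i. q * h i"] in_vars_mult simp: sum_distrib_left mult.assoc)
qed

lemma gen_ideal_sum: "(\<And>x. x \<in> A \<Longrightarrow> F x \<in> gen_ideal m gs) \<Longrightarrow> (\<Sum>x\<in>A. F x) \<in> gen_ideal m gs"
  by (induction A rule: infinite_finite_induct) (auto intro: gen_ideal_add gen_ideal_zero)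

lemma generator_in_gen_ideal:
  assumes "i < length gs"
  shows "gs ! i \<in> gen_ideal m gs"
proof -
  have "(\<Sum>j<length gs. (if j = i then 1 else 0) * gs ! j) = (\<Sum>j<length gs. if j = i then gs ! j else 0)"
    by (rule sum.cong) auto
  also have "\<dots> = gs ! i"
    using assms by simp
  finally have "(\<Sum>j<length gs. (if j = i then 1 else 0) * gs ! j) = gs ! i" .
  then show ?thesis unfolding gen_ideal_def
    by (intro CollectI exI[of _ "\<lambda>j. if j = i then 1 else 0"]) (auto simp: in_vars_def)
qed

lemma exponents_add_eq_0_iff: "(\<alpha>::nat \<Rightarrow>\<^sub>0 nat) + \<beta> = 0 \<longleftrightarrow> \<alpha> = 0 \<and> \<beta> = 0"
proof
  assume "\<alpha> + \<beta> = 0"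
  then have "lookup \<alpha> t + lookup \<beta> t = 0" for t by (metis lookup_add lookup_zero)
  then show "\<alpha> = 0 \<and> \<beta> = 0" by (auto intro: poly_mapping_eqI)
qed simp

lemma constant_coeff_mult_eq_0: "lookup g 0 = 0 \<Longrightarrow> lookup ((h::cpoly) * g) 0 = 0"
proof -
  assume "lookup g 0 = 0"
  then have "0 \<notin> keys (h * g)"
    using keys_mult[of h g] by (auto simp: in_keys_iff exponents_add_eq_0_iff)
  then show ?thesis by (simp add: in_keys_iff)
qed

lemma one_notin_gen_ideal_homog:
  assumes "0 < d" and "\<forall>i<length gs. homog d (gs ! i)"
  shows "1 \<notin> gen_ideal m gs"
proof
  assume "1 \<in> gen_ideal m gs"
  then obtain h where one: "1 = (\<Sum>i<length gs. h i * gs ! i)"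
    unfolding gen_ideal_def by auto
  have "lookup (1::cpoly) 0 = (\<Sum>i<length gs. lookup (h i * gs ! i) 0)"
    by (subst one) (simp add: lookup_sum)
  also have "\<dots> = 0"
    using assms constant_coeff_homog constant_coeff_mult_eq_0 by simp
  finally show False by simp
qed


definition monomial_map ::
    "((nat \<Rightarrow>\<^sub>0 nat) \<Rightarrow> complex) \<Rightarrow> ((nat \<Rightarrow>\<^sub>0 nat) \<Rightarrow> (nat \<Rightarrow>\<^sub>0 nat)) \<Rightarrow> cpoly \<Rightarrow> cpoly" where
  "monomial_map c b f = (\<Sum>\<alpha>\<in>keys f. single (b \<alpha>) (c \<alpha> * lookup f \<alpha>))"

lemma monomial_map_superset:
  assumes "finite S" "keys f \<subseteq> S"
  shows "monomial_map c b f = (\<Sum>\<alpha>\<in>S. single (b \<alpha>) (c \<alpha> * lookup f \<alpha>))"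
  unfolding monomial_map_def using assms
  by (intro sum.mono_neutral_left) (auto simp: in_keys_iff)

lemma monomial_map_add: "monomial_map c b (f + g) = monomial_map c b f + monomial_map c b g"
proof -
  let ?S = "keys f \<union> keys g"
  have "monomial_map c b (f + g) = (\<Sum>\<alpha>\<in>?S. single (b \<alpha>) (c \<alpha> * lookup (f + g) \<alpha>))"
    by (rule monomial_map_superset) (auto simp: keys_add)
  also have "\<dots> = (\<Sum>\<alpha>\<in>?S. single (b \<alpha>) (c \<alpha> * lookup f \<alpha>))
                  + (\<Sum>\<alpha>\<in>?S. single (b \<alpha>) (c \<alpha> * lookup g \<alpha>))"
    by (simp add: lookup_add distrib_left single_add sum.distrib)
  finally show ?thesis using monomial_map_superset[of ?S] by auto
qed

lemma monomial_map_diff: "monomial_map c b (f - g) = monomial_map c b f - monomial_map c b g"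
proof -
  have "monomial_map c b (- g) = - monomial_map c b g"
    by (simp add: monomial_map_def single_uminus sum_negf)
  then show ?thesis using monomial_map_add[of c b f "- g"] by simp
qed

lemma monomial_map_single: "monomial_map c b (single \<alpha> v) = single (b \<alpha>) (c \<alpha> * v)"
  by (cases "v = 0") (simp_all add: monomial_map_def)

lemma monomial_map_sum:
  "monomial_map c b (\<Sum>x\<in>A. F x) = (\<Sum>x\<in>A. monomial_map c b (F x))"
  by (induction A rule: infinite_finite_induct) (simp_all add: monomial_map_add monomial_map_def[of _ _ 0])

lemma lookup_monomial_map:
  "lookup (monomial_map c b f) \<gamma> = (\<Sum>\<alpha>\<in>{\<alpha>\<in>keys f. b \<alpha> = \<gamma>}. c \<alpha> * lookup f \<alpha>)"
  by (simp add: monomial_map_def lookup_sum lookup_single when_def sum.inter_filter)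

lemma monomial_map_mult:
  assumes b: "\<And>\<alpha> \<beta>. b (\<alpha> + \<beta>) = b \<alpha> + b \<beta>" and c: "\<And>\<alpha> \<beta>. c (\<alpha> + \<beta>) = c \<alpha> * c \<beta>"
  shows "monomial_map c b (f * g) = monomial_map c b f * monomial_map c b g"
proof -
  have "monomial_map c b (f * g) = (\<Sum>\<alpha>\<in>keys f. \<Sum>\<beta>\<in>keys g.
          single (b (\<alpha> + \<beta>)) (c (\<alpha> + \<beta>) * (lookup f \<alpha> * lookup g \<beta>)))"
    by (subst mult_eq_sum_single) (simp add: monomial_map_sum monomial_map_single)
  also have "\<dots> = (\<Sum>\<alpha>\<in>keys f. \<Sum>\<beta>\<in>keys g.
          single (b \<alpha>) (c \<alpha> * lookup f \<alpha>) * single (b \<beta>) (c \<beta> * lookup g \<beta>))"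
    by (simp add: b c mult_single mult_ac)
  also have "\<dots> = monomial_map c b f * monomial_map c b g"
    by (simp add: monomial_map_def sum_product)
  finally show ?thesis .
qed

lemma monomial_map_power:
  assumes b: "\<And>\<alpha> \<beta>. b (\<alpha> + \<beta>) = b \<alpha> + b \<beta>" and c: "\<And>\<alpha> \<beta>. c (\<alpha> + \<beta>) = c \<alpha> * c \<beta>"
    and "b 0 = 0" "c 0 = 1"
  shows "monomial_map c b (f ^ e) = monomial_map c b f ^ e"
  using monomial_map_single[of c b 0 1] assms
  by (induction e) (simp_all add: monomial_map_mult[OF b c])

section \<open>Roots of unity\<close>

lemma zeta_power: "zeta p ^ c = cis (2 * pi * real c / real p)"
  by (simp add: zeta_def DeMoivre mult_ac)

lemma zeta_power_self: "0 < p \<Longrightarrow> zeta p ^ p = 1"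
  by (simp add: zeta_power)

lemma zeta_power_mod: "0 < p \<Longrightarrow> zeta p ^ (c mod p) = zeta p ^ c"
  by (metis mult_div_mod_eq power_add power_mult power_one zeta_power_self mult_1)

lemma zeta_power_power_self: "0 < p \<Longrightarrow> (zeta p ^ c) ^ p = 1"
  by (metis power_mult mult.commute zeta_power_self power_one)

lemma zeta_power_eq_1_iff:
  assumes "0 < p"
  shows "zeta p ^ c = 1 \<longleftrightarrow> p dvd c"
proof
  assume "zeta p ^ c = 1"
  then have eq: "cis (2 * pi * real (c mod p) / real p) = cis (2 * pi * real 0 / real p)"
    using zeta_power_mod[OF assms, of c] by (simp add: zeta_power)
  have "inj_on (\<lambda>k. cis (2 * pi * real k / real p)) {..<p}"
    using bij_betw_roots_unity[OF assms] by (simp add: bij_betw_def)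
  from inj_onD[OF this eq] show "p dvd c"
    using assms by (simp add: dvd_eq_mod_eq_0)
qed (auto simp: zeta_power_self[OF assms] power_mult)

lemma root_of_unity_eq_zeta_power:
  assumes "0 < p" "w ^ p = 1"
  shows "\<exists>l<p. w = zeta p ^ l"
proof -
  have "w \<in> (\<lambda>k. cis (2 * pi * real k / real p)) ` {..<p}"
    using bij_betw_roots_unity[OF assms(1)] assms(2) by (simp add: bij_betw_def)
  then show ?thesis by (auto simp: zeta_power)
qed

lemma sum_zeta_power:
  assumes "0 < p"
  shows "(\<Sum>t<p. zeta p ^ (t * c)) = (if p dvd c then of_nat p else 0)"
proof (cases "p dvd c")
  case True
  then have "zeta p ^ (t * c) = 1" for t
    by (simp add: zeta_power_eq_1_iff[OF assms])
  then show ?thesis using True by simp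
next
  case False
  then have ne: "zeta p ^ c \<noteq> 1" using zeta_power_eq_1_iff[OF assms] by simp
  have "(\<Sum>t<p. zeta p ^ (t * c)) = (\<Sum>t<p. (zeta p ^ c) ^ t)"
    by (simp add: power_mult[symmetric] mult.commute)
  also have "\<dots> = ((zeta p ^ c) ^ p - 1) / (zeta p ^ c - 1)"
    using ne by (rule geometric_sum)
  finally show ?thesis using False zeta_power_power_self[OF assms] by simp
qed

lemma sum_PiE_zeta_power:
  fixes k :: nat and c :: "nat \<Rightarrow> nat"
  assumes "0 < p"
  shows "(\<Sum>i\<in>{..<k} \<rightarrow>\<^sub>E {..<p}. zeta p ^ (\<Sum>j<k. i j * c j)) =
         (\<Prod>j<k. if p dvd c j then of_nat p else 0)"
proof -
  have "(\<Sum>i\<in>{..<k} \<rightarrow>\<^sub>E {..<p}. zeta p ^ (\<Sum>j<k. i j * c j))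
        = (\<Sum>i\<in>{..<k} \<rightarrow>\<^sub>E {..<p}. \<Prod>j<k. zeta p ^ (i j * c j))"
    by (simp add: power_sum)
  also have "\<dots> = (\<Prod>j<k. \<Sum>t<p. zeta p ^ (t * c j))"
    by (rule prod_sum_PiE[symmetric]) auto
  finally show ?thesis by (simp add: sum_zeta_power[OF assms])
qed

lemma eq_if_dvd_add_pred_mult:
  fixes a b p :: nat
  assumes "a < p" "b < p" "p dvd a + (p - 1) * b"
  shows "a = b"
proof -
  have "int ((p - 1) * b) = (int p - 1) * int b"
    using assms by (simp add: of_nat_diff)
  then have "int (a + (p - 1) * b) = int a - int b + int p * int b"
    by (simp add: algebra_simps)
  then have "int a - int b = int (a + (p - 1) * b) - int p * int b"
    by simp
  moreover have "int p dvd int (a + (p - 1) * b)"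
    using assms(3) by (simp only: int_dvd_int_iff)
  ultimately have "int p dvd int a - int b"
    by (metis dvd_diff dvd_triv_left)
  moreover have "\<bar>int a - int b\<bar> < int p" using assms by linarith
  ultimately show ?thesis using dvd_imp_le_int[of "int a - int b" "int p"] by fastforce
qed


section \<open>Reduction of exponents\<close>

definition reduce_step :: "nat \<Rightarrow> nat \<Rightarrow> nat \<Rightarrow> (nat \<Rightarrow>\<^sub>0 nat) \<Rightarrow> (nat \<Rightarrow>\<^sub>0 nat)" where
  "reduce_step p n j \<gamma> =
     Poly_Mapping.update j (lookup \<gamma> j mod p) \<gamma> + single n (p * (lookup \<gamma> j div p))"

primrec reduce :: "nat \<Rightarrow> nat \<Rightarrow> nat \<Rightarrow> (nat \<Rightarrow>\<^sub>0 nat) \<Rightarrow> (nat \<Rightarrow>\<^sub>0 nat)" where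
  "reduce p n 0 \<alpha> = \<alpha>"
| "reduce p n (Suc k) \<alpha> = reduce_step p n k (reduce p n k \<alpha>)"

lemma exponents_eq_update_mod_add:
  "(\<gamma>::nat \<Rightarrow>\<^sub>0 nat) = Poly_Mapping.update j (lookup \<gamma> j mod p) \<gamma> + single j (p * (lookup \<gamma> j div p))"
  by (rule poly_mapping_eqI) (simp add: lookup_add lookup_update lookup_single when_def)

lemma lookup_reduce:
  "k \<le> n \<Longrightarrow> lookup (reduce p n k \<alpha>) t =
     (if t < k then lookup \<alpha> t mod p
      else if t = n then lookup \<alpha> n + p * (\<Sum>j<k. lookup \<alpha> j div p) else lookup \<alpha> t)"
  by (induction k arbitrary: t)
    (auto simp: reduce_step_def lookup_add lookup_update lookup_single when_def algebra_simps)

lemma keys_reduce: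
  assumes "k \<le> n" "keys \<alpha> \<subseteq> {..<Suc n}"
  shows "keys (reduce p n k \<alpha>) \<subseteq> {..<Suc n}"
proof
  fix t assume "t \<in> keys (reduce p n k \<alpha>)"
  moreover have "lookup \<alpha> t = 0" if "t \<notin> {..<Suc n}"
    using assms(2) that by (auto simp: in_keys_iff)
  ultimately show "t \<in> {..<Suc n}"
    using assms(1) by (auto simp: lookup_reduce in_keys_iff split: if_splits)
qed

lemma lookup_reduce_less: "0 < p \<Longrightarrow> k \<le> n \<Longrightarrow> t < k \<Longrightarrow> lookup (reduce p n k \<alpha>) t < p"
  by (simp add: lookup_reduce)

lemma reduce_eq_self: "k \<le> n \<Longrightarrow> \<forall>t<k. lookup \<alpha> t < p \<Longrightarrow> reduce p n k \<alpha> = \<alpha>"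
  by (rule poly_mapping_eqI) (simp add: lookup_reduce)

lemma mdeg_reduce: "k \<le> n \<Longrightarrow> mdeg (reduce p n k \<alpha>) = mdeg \<alpha>"
proof (induction k)
  case (Suc k)
  let ?\<gamma> = "reduce p n k \<alpha>"
  have "mdeg ?\<gamma> = mdeg (Poly_Mapping.update k (lookup ?\<gamma> k mod p) ?\<gamma>) + p * (lookup ?\<gamma> k div p)"
    by (subst exponents_eq_update_mod_add[of ?\<gamma> k p]) (simp add: mdeg_add)
  with Suc show ?case by (simp add: reduce_step_def mdeg_add)
qed simp

section \<open>Substituting roots of unity\<close>

text \<open>root_subst p n k i is the ring endomorphism \<xi>_j \<mapsto> \<zeta>^(i_j) \<xi>_n (j < k) fixing the other
  variables; collapse and root_weight describe its effect on a monomial.\<close>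

definition collapse :: "nat \<Rightarrow> nat \<Rightarrow> (nat \<Rightarrow>\<^sub>0 nat) \<Rightarrow> (nat \<Rightarrow>\<^sub>0 nat)" where
  "collapse n k \<alpha> = Abs_poly_mapping (\<lambda>t. if t < k then 0
     else if t = n then lookup \<alpha> n + (\<Sum>j<k. lookup \<alpha> j) else lookup \<alpha> t)"

definition root_weight :: "nat \<Rightarrow> nat \<Rightarrow> (nat \<Rightarrow> nat) \<Rightarrow> (nat \<Rightarrow>\<^sub>0 nat) \<Rightarrow> complex" where
  "root_weight p k i \<alpha> = zeta p ^ (\<Sum>j<k. i j * lookup \<alpha> j)"

definition root_subst :: "nat \<Rightarrow> nat \<Rightarrow> nat \<Rightarrow> (nat \<Rightarrow> nat) \<Rightarrow> cpoly \<Rightarrow> cpoly" where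
  "root_subst p n k i = monomial_map (root_weight p k i) (collapse n k)"

lemma lookup_collapse:
  "lookup (collapse n k \<alpha>) t =
     (if t < k then 0 else if t = n then lookup \<alpha> n + (\<Sum>j<k. lookup \<alpha> j) else lookup \<alpha> t)"
proof -
  let ?f = "\<lambda>t. if t < k then 0 else if t = n then lookup \<alpha> n + (\<Sum>j<k. lookup \<alpha> j) else lookup \<alpha> t"
  have "{t. ?f t \<noteq> 0} \<subseteq> insert n (keys \<alpha>)"
    by (auto simp: in_keys_iff)
  then have "finite {t. ?f t \<noteq> 0}"
    by (rule finite_subset) simp
  then show ?thesis unfolding collapse_def by simp
qed

lemma collapse_add: "collapse n k (\<alpha> + \<beta>) = collapse n k \<alpha> + collapse n k \<beta>"
  by (rule poly_mapping_eqI) (simp add: lookup_collapse lookup_add sum.distrib)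

lemma collapse_zero: "collapse n k 0 = 0"
  by (rule poly_mapping_eqI) (simp add: lookup_collapse)

lemma collapse_single: "k \<le> n \<Longrightarrow> collapse n k (single j e) = single (if j < k then n else j) e"
  by (rule poly_mapping_eqI) (auto simp: lookup_collapse lookup_single when_def)

lemma root_weight_add: "root_weight p k i (\<alpha> + \<beta>) = root_weight p k i \<alpha> * root_weight p k i \<beta>"
  by (simp add: root_weight_def lookup_add distrib_left sum.distrib power_add)

lemma root_weight_single:
  "root_weight p k i (single j e) = (if j < k then zeta p ^ (i j * e) else 1)"
proof -
  have "(\<Sum>t<k. i t * lookup (single j e) t) = (if j < k then i j * e else 0)"
    by (simp add: lookup_single when_def if_distrib sum.delta cong: if_cong)
  then show ?thesis by (simp add: root_weight_def)
qed

lemma eq_if_collapse_eq: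
  assumes "k \<le> n" "collapse n k \<alpha> = collapse n k \<beta>" "\<forall>j<k. lookup \<alpha> j = lookup \<beta> j"
  shows "\<alpha> = \<beta>"
proof (rule poly_mapping_eqI)
  fix t
  have "lookup (collapse n k \<alpha>) t = lookup (collapse n k \<beta>) t"
    using assms(2) by simp
  moreover have "(\<Sum>j<k. lookup \<alpha> j) = (\<Sum>j<k. lookup \<beta> j)"
    using assms(3) by simp
  ultimately show "lookup \<alpha> t = lookup \<beta> t"
    using assms(1,3) by (cases "t < k"; cases "t = n") (simp_all add: lookup_collapse)
qed

lemma root_subst_add: "root_subst p n k i (f + g) = root_subst p n k i f + root_subst p n k i g"
  by (simp add: root_subst_def monomial_map_add)

lemma root_subst_diff: "root_subst p n k i (f - g) = root_subst p n k i f - root_subst p n k i g"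
  by (simp add: root_subst_def monomial_map_diff)

lemma root_subst_sum: "root_subst p n k i (\<Sum>x\<in>A. F x) = (\<Sum>x\<in>A. root_subst p n k i (F x))"
  by (simp add: root_subst_def monomial_map_sum)

lemma root_subst_mult: "root_subst p n k i (f * g) = root_subst p n k i f * root_subst p n k i g"
  unfolding root_subst_def by (rule monomial_map_mult) (simp_all add: collapse_add root_weight_add)

lemma root_subst_power: "root_subst p n k i (f ^ e) = root_subst p n k i f ^ e"
  unfolding root_subst_def
  by (rule monomial_map_power) (simp_all add: collapse_add collapse_zero root_weight_add root_weight_def[of _ _ _ 0])

lemma root_subst_single:
  "root_subst p n k i (single \<alpha> c) = single (collapse n k \<alpha>) (root_weight p k i \<alpha> * c)"
  by (simp add: root_subst_def monomial_map_single)

lemma root_subst_pconst: "root_subst p n k i (pconst c) = pconst c"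
  by (simp add: pconst_def root_subst_single collapse_zero root_weight_def)

lemma root_subst_pvar:
  assumes "k \<le> n"
  shows "root_subst p n k i (pvar j) = (if j < k then pconst (zeta p ^ i j) * pvar n else pvar j)"
proof -
  have "root_subst p n k i (pvar j) =
          single (single (if j < k then n else j) 1) (if j < k then zeta p ^ i j else 1)"
    using assms by (simp add: pvar_def root_subst_single collapse_single root_weight_single)
  then show ?thesis by (simp add: pvar_def pconst_def mult_single)
qed

lemma root_subst_binomial:
  assumes "0 < p" "j < k" "k \<le> n"
  shows "root_subst p n k i (pvar j ^ p - pvar n ^ p) = 0"
proof -
  have "root_subst p n k i (pvar j ^ p - pvar n ^ p) = (pconst (zeta p ^ i j) * pvar n) ^ p - pvar n ^ p"
    using assms by (simp add: root_subst_diff root_subst_power root_subst_pvar)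
  also have "\<dots> = 0"
    using assms(1) by (simp add: power_mult_distrib pconst_power zeta_power_power_self pconst_one)
  finally show ?thesis .
qed

abbreviation Mideal :: "nat \<Rightarrow> nat \<Rightarrow> (nat \<Rightarrow> complex) \<Rightarrow> nat \<Rightarrow> cpoly set" where
  "Mideal p n z k \<equiv> gen_ideal (Suc n) (take k (Mbars p (Suc n) z))"

lemma length_Mbars [simp]: "length (Mbars p m z) = m"
  by (simp add: Mbars_def)

lemma nth_Mbars: "i < m \<Longrightarrow> Mbars p m z ! i = Mbar p m z i"
  by (simp add: Mbars_def)

lemma homog_Mbar: "homog p (Mbar p m z i)"
proof -
  have "homog 1 (pconst (z j) * pvar j)" for j
    using homog_mult[of 0 "pconst (z j)" 1 "pvar j"]
    by (simp add: pconst_def pvar_def homog_single)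
  then have "homog (p * 1) ((\<Sum>j<m. pconst (z j) * pvar j) ^ p)"
    by (intro homog_power homog_sum)
  then show ?thesis
    by (simp add: Mbar_def pvar_power homog_diff homog_monomial)
qed

definition reduce_poly :: "nat \<Rightarrow> nat \<Rightarrow> nat \<Rightarrow> cpoly \<Rightarrow> cpoly" where
  "reduce_poly p n k f = (\<Sum>\<alpha>\<in>keys f. single (reduce p n k \<alpha>) (lookup f \<alpha>))"

lemma poly_diff_reduce_poly:
  "f - reduce_poly p n k f =
     (\<Sum>\<alpha>\<in>keys f. pconst (lookup f \<alpha>) * (monomial \<alpha> - monomial (reduce p n k \<alpha>)))"
  by (subst (1) poly_eq_sum_single)
    (simp add: reduce_poly_def sum_subtractf[symmetric] single_eq_pconst_mult right_diff_distrib)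

lemma lookup_keys_reduce_poly_less:
  assumes "0 < p" "k \<le> n" "\<alpha> \<in> keys (reduce_poly p n k f)" "t < k"
  shows "lookup \<alpha> t < p"
proof -
  obtain \<beta> where "\<alpha> = reduce p n k \<beta>"
    using assms(3) keys_sum[of _ "keys f"] unfolding reduce_poly_def by (fastforce split: if_splits)
  then show ?thesis using lookup_reduce_less assms by simp
qed

context
  fixes p n :: nat and z :: "nat \<Rightarrow> complex"
  assumes p: "0 < p"
begin

lemma binomial_in_Mideal:
  assumes "j < k" "k \<le> n"
  shows "monomial (single j p) - monomial (single n p) \<in> Mideal p n z k"
proof -
  have "take k (Mbars p (Suc n) z) ! j \<in> Mideal p n z k"
    using assms by (intro generator_in_gen_ideal) simp
  then show ?thesis using assms by (simp add: nth_Mbars Mbar_def pvar_power)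
qed

lemma monomial_diff_in_Mideal:
  assumes "j < k" "k \<le> n" "keys \<beta> \<subseteq> {..<Suc n}"
  shows "monomial (\<beta> + single j (p * q)) - monomial (\<beta> + single n (p * q)) \<in> Mideal p n z k"
  using assms(3)
proof (induction q arbitrary: \<beta>)
  case 0
  then show ?case by (simp add: gen_ideal_zero)
next
  case (Suc q)
  have "monomial (\<beta> + single j (p * Suc q)) - monomial (\<beta> + single n (p * Suc q)) =
          monomial (\<beta> + single j (p * q)) * (monomial (single j p) - monomial (single n p))
          + (monomial ((\<beta> + single n p) + single j (p * q))
             - monomial ((\<beta> + single n p) + single n (p * q)))"
    by (simp add: right_diff_distrib monomial_mult ac_simps flip: single_add)
  moreover have "keys (\<beta> + single j (p * q)) \<subseteq> {..<Suc n}" "keys (\<beta> + single n p) \<subseteq> {..<Suc n}"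
    using Suc.prems assms(1,2) by (auto simp: keys_add_exponents)
  ultimately show ?case
    using assms(1,2) Suc.IH
    by (metis gen_ideal_add gen_ideal_mult in_vars_monomial binomial_in_Mideal)
qed

lemma monomial_diff_reduce_in_Mideal:
  assumes "k \<le> K" "K \<le> n" "keys \<alpha> \<subseteq> {..<Suc n}"
  shows "monomial \<alpha> - monomial (reduce p n k \<alpha>) \<in> Mideal p n z K"
  using assms(1)
proof (induction k)
  case 0
  then show ?case by (simp add: gen_ideal_zero)
next
  case (Suc k)
  let ?\<gamma> = "reduce p n k \<alpha>"
  let ?\<beta> = "Poly_Mapping.update k (lookup ?\<gamma> k mod p) ?\<gamma>"
  have "keys ?\<gamma> \<subseteq> {..<Suc n}"
    using Suc.prems assms by (intro keys_reduce) simp_all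
  then have "keys ?\<beta> \<subseteq> {..<Suc n}"
    using Suc.prems assms by (auto simp: keys_update)
  then have "monomial (?\<beta> + single k (p * (lookup ?\<gamma> k div p)))
               - monomial (?\<beta> + single n (p * (lookup ?\<gamma> k div p))) \<in> Mideal p n z K"
    using Suc.prems assms by (intro monomial_diff_in_Mideal) simp_all
  then have "monomial ?\<gamma> - monomial (reduce p n (Suc k) \<alpha>) \<in> Mideal p n z K"
    by (simp add: reduce_step_def flip: exponents_eq_update_mod_add)
  with Suc show ?case
    using gen_ideal_add by fastforce
qed

lemma poly_diff_reduce_poly_in_Mideal:
  assumes "k \<le> n" "in_vars (Suc n) f"
  shows "f - reduce_poly p n k f \<in> Mideal p n z k"
  unfolding poly_diff_reduce_poly
  using assms by (intro gen_ideal_sum gen_ideal_mult in_vars_pconst monomial_diff_reduce_in_Mideal)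
    (auto simp: in_vars_def)

lemma root_subst_Mideal:
  assumes "k \<le> n" "f \<in> Mideal p n z k"
  shows "root_subst p n k i f = 0"
proof -
  obtain h where "f = (\<Sum>j<k. h j * take k (Mbars p (Suc n) z) ! j)"
    using assms unfolding gen_ideal_def by auto
  then show ?thesis
    using assms(1) p
    by (simp add: root_subst_sum root_subst_mult nth_Mbars Mbar_def root_subst_binomial)
qed

end

context
  fixes p n :: nat and z :: "nat \<Rightarrow> complex"
  assumes p: "0 < p"
begin

lemma prod_dvd_exponents_eq:
  assumes "k \<le> n" "\<forall>t<k. lookup \<alpha> t < p" "\<forall>t<k. lookup \<beta> t < p"
    and "collapse n k \<alpha> = collapse n k \<beta>"
  shows "(\<Prod>j<k. if p dvd lookup \<alpha> j + (p - 1) * lookup \<beta> j then of_nat p else 0)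
           = (if \<alpha> = \<beta> then of_nat p ^ k else (0::complex))"
proof (cases "\<alpha> = \<beta>")
  case True
  have "lookup \<beta> j + (p - 1) * lookup \<beta> j = p * lookup \<beta> j" for j
    using p by (cases p) simp_all
  then show ?thesis using True by simp
next
  case False
  then obtain j where "j < k" "\<not> p dvd lookup \<alpha> j + (p - 1) * lookup \<beta> j"
    using eq_if_collapse_eq[OF assms(1,4)] eq_if_dvd_add_pred_mult assms(2,3) by blast
  then show ?thesis using False by (auto intro: prod_zero)
qed

text \<open>Fourier inversion: a reduced polynomial is determined by its root substitutions. The factor
  \<zeta>^((p-1) i\<cdot>\<beta>) stands for \<zeta>^(-i\<cdot>\<beta>), avoiding negative exponents.\<close>

lemma sum_root_subst_coeff:
  assumes "k \<le> n" and r: "\<forall>\<alpha>\<in>keys r. \<forall>t<k. lookup \<alpha> t < p" and \<beta>: "\<forall>t<k. lookup \<beta> t < p"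
  shows "(\<Sum>i\<in>{..<k} \<rightarrow>\<^sub>E {..<p}. zeta p ^ (\<Sum>j<k. i j * ((p - 1) * lookup \<beta> j))
            * lookup (root_subst p n k i r) (collapse n k \<beta>)) = of_nat p ^ k * lookup r \<beta>"
proof -
  define K where "K = {\<alpha>\<in>keys r. collapse n k \<alpha> = collapse n k \<beta>}"
  define c where "c \<alpha> j = lookup \<alpha> j + (p - 1) * lookup \<beta> j" for \<alpha> j
  have weight: "zeta p ^ (\<Sum>j<k. i j * ((p - 1) * lookup \<beta> j)) * root_weight p k i \<alpha>
                  = zeta p ^ (\<Sum>j<k. i j * c \<alpha> j)" for i \<alpha>
    by (simp add: root_weight_def c_def distrib_left sum.distrib power_add mult.commute)
  have "zeta p ^ (\<Sum>j<k. i j * ((p - 1) * lookup \<beta> j)) * lookup (root_subst p n k i r) (collapse n k \<beta>)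
          = (\<Sum>\<alpha>\<in>K. lookup r \<alpha> * zeta p ^ (\<Sum>j<k. i j * c \<alpha> j))" for i
  proof -
    have coeff: "lookup (root_subst p n k i r) (collapse n k \<beta>)
                   = (\<Sum>\<alpha>\<in>K. root_weight p k i \<alpha> * lookup r \<alpha>)"
      by (simp add: root_subst_def lookup_monomial_map K_def)
    show ?thesis
      unfolding coeff sum_distrib_left weight[symmetric] by (simp add: ac_simps)
  qed
  then have "(\<Sum>i\<in>{..<k} \<rightarrow>\<^sub>E {..<p}. zeta p ^ (\<Sum>j<k. i j * ((p - 1) * lookup \<beta> j))
            * lookup (root_subst p n k i r) (collapse n k \<beta>))
        = (\<Sum>i\<in>{..<k} \<rightarrow>\<^sub>E {..<p}. \<Sum>\<alpha>\<in>K. lookup r \<alpha> * zeta p ^ (\<Sum>j<k. i j * c \<alpha> j))"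
    by simp
  also have "\<dots> = (\<Sum>\<alpha>\<in>K. lookup r \<alpha> * (\<Prod>j<k. if p dvd c \<alpha> j then of_nat p else 0))"
    by (subst sum.swap) (simp add: sum_distrib_left[symmetric] sum_PiE_zeta_power[OF p])
  also have "\<dots> = (\<Sum>\<alpha>\<in>K. if \<alpha> = \<beta> then of_nat p ^ k * lookup r \<beta> else 0)"
  proof (rule sum.cong)
    fix \<alpha> assume "\<alpha> \<in> K"
    then have "(\<Prod>j<k. if p dvd c \<alpha> j then of_nat p else 0) = (if \<alpha> = \<beta> then of_nat p ^ k else 0 :: complex)"
      using assms unfolding K_def c_def by (intro prod_dvd_exponents_eq) auto
    then show "lookup r \<alpha> * (\<Prod>j<k. if p dvd c \<alpha> j then of_nat p else 0)
                 = (if \<alpha> = \<beta> then of_nat p ^ k * lookup r \<beta> else 0)"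
      by simp
  qed simp
  also have "\<dots> = of_nat p ^ k * lookup r \<beta>"
    by (simp add: K_def in_keys_iff)
  finally show ?thesis .
qed

lemma reduced_eq_0_if_root_substs_vanish:
  assumes "k \<le> n" "\<forall>\<alpha>\<in>keys r. \<forall>t<k. lookup \<alpha> t < p"
    and "\<forall>i\<in>{..<k} \<rightarrow>\<^sub>E {..<p}. root_subst p n k i r = 0"
  shows "r = 0"
proof (rule poly_mapping_eqI)
  fix \<beta>
  show "lookup r \<beta> = lookup 0 \<beta>"
  proof (cases "\<beta> \<in> keys r")
    case True
    then have "of_nat p ^ k * lookup r \<beta> = 0"
      using sum_root_subst_coeff[of k r \<beta>] assms by simp
    then show ?thesis using p by simp
  qed (simp add: in_keys_iff)
qed

lemma reduce_poly_eq_0_if_root_substs_vanish: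
  assumes "k \<le> n" "in_vars (Suc n) f" "\<forall>i\<in>{..<k} \<rightarrow>\<^sub>E {..<p}. root_subst p n k i f = 0"
  shows "reduce_poly p n k f = 0"
proof (rule reduced_eq_0_if_root_substs_vanish[OF assms(1)])
  show "\<forall>\<alpha>\<in>keys (reduce_poly p n k f). \<forall>t<k. lookup \<alpha> t < p"
    using lookup_keys_reduce_poly_less[OF p assms(1)] by blast
  have "f - reduce_poly p n k f \<in> Mideal p n z k"
    using poly_diff_reduce_poly_in_Mideal[OF p assms(1,2)] .
  then have "root_subst p n k i (f - reduce_poly p n k f) = 0" for i
    using root_subst_Mideal[OF p assms(1)] by blast
  then show "\<forall>i\<in>{..<k} \<rightarrow>\<^sub>E {..<p}. root_subst p n k i (reduce_poly p n k f) = 0"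
    using assms(3) by (simp add: root_subst_diff)
qed

lemma Mideal_iff_root_substs_vanish:
  assumes "k \<le> n" "in_vars (Suc n) f"
  shows "f \<in> Mideal p n z k \<longleftrightarrow> (\<forall>i\<in>{..<k} \<rightarrow>\<^sub>E {..<p}. root_subst p n k i f = 0)"
proof
  assume "\<forall>i\<in>{..<k} \<rightarrow>\<^sub>E {..<p}. root_subst p n k i f = 0"
  then have "reduce_poly p n k f = 0"
    using reduce_poly_eq_0_if_root_substs_vanish[OF assms] by blast
  then show "f \<in> Mideal p n z k"
    using poly_diff_reduce_poly_in_Mideal[OF p assms] by simp
qed (use root_subst_Mideal[OF p assms(1)] in blast)

end

section \<open>Regularity\<close>

lemma root_subst_linear_form:
  "root_subst p n n i (\<Sum>j<Suc n. pconst (z j) * pvar j)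
     = pconst ((\<Sum>j<n. z j * zeta p ^ i j) + z n) * pvar n"
proof -
  have "root_subst p n n i (\<Sum>j<Suc n. pconst (z j) * pvar j)
          = (\<Sum>j<n. pconst (z j) * (pconst (zeta p ^ i j) * pvar n)) + pconst (z n) * pvar n"
    by (simp add: root_subst_add root_subst_sum root_subst_mult root_subst_pconst root_subst_pvar)
  also have "\<dots> = pconst ((\<Sum>j<n. z j * zeta p ^ i j) + z n) * pvar n"
    by (simp add: pconst_sum sum_distrib_right distrib_right pconst_mult pconst_add[symmetric]
        mult.assoc[symmetric])
  finally show ?thesis .
qed

lemma root_subst_Mbar_last:
  "root_subst p n n i (Mbar p (Suc n) z n)
     = pconst (1 - ((\<Sum>j<n. z j * zeta p ^ i j) + z n) ^ p) * pvar n ^ p"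
proof -
  have "root_subst p n n i (Mbar p (Suc n) z n)
          = pvar n ^ p - root_subst p n n i (\<Sum>j<Suc n. pconst (z j) * pvar j) ^ p"
    by (simp add: Mbar_def root_subst_diff root_subst_power root_subst_pvar del: sum.lessThan_Suc)
  then show ?thesis
    by (simp add: root_subst_linear_form power_mult_distrib pconst_power pconst_one
        left_diff_distrib flip: pconst_diff del: sum.lessThan_Suc)
qed

text \<open>If w^p = 1, then w = \<zeta>^(p-t) with 1 \<le> t \<le> p, and the factor of R(z) indexed by
  \<iota>_j = (i_j + t - 1) mod p + 1 (j < n), \<iota>_n = t equals 1 - \<zeta>^t w = 0.\<close>

lemma power_ne_1_if_Rval_ne_0:
  assumes p: "0 < p" and R: "Rval p (Suc n) z \<noteq> 0" and i: "i \<in> {..<n} \<rightarrow>\<^sub>E {..<p}"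
  shows "((\<Sum>j<n. z j * zeta p ^ i j) + z n) ^ p \<noteq> 1"
proof
  let ?w = "(\<Sum>j<n. z j * zeta p ^ i j) + z n"
  assume "?w ^ p = 1"
  then obtain l where l: "l < p" "?w = zeta p ^ l"
    using root_of_unity_eq_zeta_power[OF p] by blast
  define t where "t = p - l"
  have t: "1 \<le> t" "t \<le> p" using l unfolding t_def by auto
  have tw: "zeta p ^ t * ?w = 1"
    using l zeta_power_self[OF p] by (simp add: t_def flip: power_add)
  define \<iota> where "\<iota> j = (if j < n then (i j + t - 1) mod p + 1 else if j = n then t else undefined)" for j
  have \<iota>: "\<iota> \<in> {..<Suc n} \<rightarrow>\<^sub>E {1..p}"
    using t p unfolding \<iota>_def by (auto simp: PiE_iff Suc_le_eq extensional_def)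
  have "zeta p ^ \<iota> j = zeta p ^ (i j + t)" if "j < n" for j
  proof -
    have "zeta p ^ \<iota> j = zeta p ^ ((i j + t - 1) mod p) * zeta p"
      using that by (simp add: \<iota>_def)
    also have "\<dots> = zeta p ^ (i j + t)"
      using t by (simp add: zeta_power_mod[OF p] flip: power_Suc2)
    finally show ?thesis .
  qed
  then have "(\<Sum>j<Suc n. zeta p ^ \<iota> j * z j) = (\<Sum>j<n. zeta p ^ (i j + t) * z j) + zeta p ^ t * z n"
    by (simp add: \<iota>_def)
  also have "\<dots> = zeta p ^ t * ?w"
    by (simp add: power_add sum_distrib_left distrib_left mult_ac)
  finally have "1 - (\<Sum>j<Suc n. zeta p ^ \<iota> j * z j) = 0"
    using tw by simp
  then have "Rval p (Suc n) z = 0"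
    unfolding Rval_def using \<iota> by (intro prod_zero) (auto intro!: bexI[of _ \<iota>] finite_PiE)
  then show False using R by simp
qed

context
  fixes p n :: nat and z :: "nat \<Rightarrow> complex"
  assumes p: "0 < p" and R: "Rval p (Suc n) z \<noteq> 0"
begin

lemma root_subst_Mbar_ne_0:
  assumes "k \<le> n" "i \<in> {..<k} \<rightarrow>\<^sub>E {..<p}"
  shows "root_subst p n k i (Mbar p (Suc n) z k) \<noteq> 0"
proof (cases "k < n")
  case True
  then have "root_subst p n k i (Mbar p (Suc n) z k) = pvar k ^ p - pvar n ^ p"
    by (simp add: Mbar_def root_subst_diff root_subst_power root_subst_pvar)
  then have "root_subst p n k i (Mbar p (Suc n) z k) = monomial (single k p) - monomial (single n p)"
    by (simp add: pvar_power)
  moreover have "single k p \<noteq> single n p"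
    using True p by (metis less_irrefl lookup_single_eq lookup_single_not_eq not_gr0)
  ultimately show ?thesis
    using inj_monomial by (simp add: inj_eq)
next
  case False
  then have "k = n" using assms(1) by simp
  then show ?thesis
    using power_ne_1_if_Rval_ne_0[OF p R] assms(2)
    by (simp add: root_subst_Mbar_last pvar_power pconst_eq_0_iff monomial_neq_0)
qed

lemma in_Mideal_if_mult_Mbar_in_Mideal:
  assumes "k \<le> n" "in_vars (Suc n) f" "f * Mbar p (Suc n) z k \<in> Mideal p n z k"
  shows "f \<in> Mideal p n z k"
proof -
  have "root_subst p n k i f = 0" if "i \<in> {..<k} \<rightarrow>\<^sub>E {..<p}" for i
  proof -
    have "root_subst p n k i f * root_subst p n k i (Mbar p (Suc n) z k) = 0"
      using root_subst_Mideal[OF p assms(1,3)] by (simp add: root_subst_mult)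
    then show ?thesis
      using root_subst_Mbar_ne_0[OF assms(1) that] by simp
  qed
  then show ?thesis
    using Mideal_iff_root_substs_vanish[OF p assms(1,2)] by blast
qed

lemma regular_sequence_Mbars: "regular_sequence (Suc n) (Mbars p (Suc n) z)"
  unfolding regular_sequence_def
proof (intro conjI allI impI)
  fix k f
  assume "k < length (Mbars p (Suc n) z)"
    and "in_vars (Suc n) f \<and> f * Mbars p (Suc n) z ! k \<in> gen_ideal (Suc n) (take k (Mbars p (Suc n) z))"
  then show "f \<in> gen_ideal (Suc n) (take k (Mbars p (Suc n) z))"
    using in_Mideal_if_mult_Mbar_in_Mideal[of k f] by (simp add: nth_Mbars)
next
  show "1 \<notin> gen_ideal (Suc n) (Mbars p (Suc n) z)"
    using one_notin_gen_ideal_homog[OF p] homog_Mbar by (simp add: nth_Mbars)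
qed

end

section \<open>The Hilbert function\<close>

interpretation cpoly: vector_space cscale
proof
  fix a b :: complex and f g :: cpoly
  show "cscale a (f + g) = cscale a f + cscale a g"
    by (simp add: cscale_eq_pconst_mult distrib_left)
  show "cscale (a + b) f = cscale a f + cscale b f"
    by (simp add: cscale_eq_pconst_mult distrib_right flip: pconst_add)
  show "cscale a (cscale b f) = cscale (a * b) f"
    by (simp add: cscale_eq_pconst_mult mult.assoc flip: pconst_mult)
  show "cscale 1 f = f"
    by (simp add: cscale_eq_pconst_mult pconst_one)
qed

lemma dim_eq_card_if_lookup_diagonal:
  assumes "v ` A \<subseteq> S" "S \<subseteq> cpoly.span (v ` A)"
    and diag: "\<And>a. a \<in> A \<Longrightarrow> lookup (v a) a = 1"
    and off_diag: "\<And>a b. a \<in> A \<Longrightarrow> b \<in> A \<Longrightarrow> b \<noteq> a \<Longrightarrow> lookup (v b) a = 0"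
  shows "cpoly.dim S = card A"
proof -
  have inj: "inj_on v A"
    by (rule inj_onI) (metis diag off_diag one_neq_zero)
  have "\<not> cpoly.dependent (v ` A)"
  proof
    assume "cpoly.dependent (v ` A)"
    then obtain T u w where T: "finite T" "T \<subseteq> v ` A" and sum: "(\<Sum>w\<in>T. cscale (u w) w) = 0"
      and w: "w \<in> T" "u w \<noteq> 0"
      unfolding cpoly.dependent_explicit by blast
    obtain a where a: "a \<in> A" "w = v a" using T w by blast
    have "0 = lookup (\<Sum>w\<in>T. cscale (u w) w) a"
      using sum by simp
    also have "\<dots> = u w * lookup w a + (\<Sum>w'\<in>T - {w}. u w' * lookup w' a)"
      using T w by (simp add: sum.remove lookup_add lookup_sum lookup_cscale)
    also have "(\<Sum>w'\<in>T - {w}. u w' * lookup w' a) = 0"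
      using T a off_diag by (intro sum.neutral) auto
    finally show False using w a diag by simp
  qed
  then have "cpoly.dim S = card (v ` A)"
    using assms(1,2) by (intro cpoly.dim_unique) auto
  then show ?thesis using card_image[OF inj] by simp
qed

definition monomials_of_degree :: "nat \<Rightarrow> nat \<Rightarrow> (nat \<Rightarrow>\<^sub>0 nat) set" where
  "monomials_of_degree n d = {\<alpha>. keys \<alpha> \<subseteq> {..<Suc n} \<and> mdeg \<alpha> = d}"

definition capped_monomials :: "nat \<Rightarrow> nat \<Rightarrow> nat \<Rightarrow> nat \<Rightarrow> (nat \<Rightarrow>\<^sub>0 nat) set" where
  "capped_monomials p n k d =
     {\<alpha>. keys \<alpha> \<subseteq> insert n {..<k} \<and> mdeg \<alpha> = d \<and> (\<forall>t<k. lookup \<alpha> t < p)}"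

lemma finite_monomials_of_degree: "finite (monomials_of_degree n d)"
  unfolding monomials_of_degree_def by (rule finite_exponents_of_mdeg) simp

lemma capped_monomials_subset: "capped_monomials p n n d \<subseteq> monomials_of_degree n d"
  by (auto simp: capped_monomials_def monomials_of_degree_def)

lemma keys_homog_part: "f \<in> homog_part (Suc n) d \<Longrightarrow> keys f \<subseteq> monomials_of_degree n d"
  by (auto simp: homog_part_def in_vars_def homog_def monomials_of_degree_def)

lemma dim_homog_part: "cpoly.dim (homog_part (Suc n) d) = card (monomials_of_degree n d)"
proof (rule dim_eq_card_if_lookup_diagonal)
  show "monomial ` monomials_of_degree n d \<subseteq> homog_part (Suc n) d"
    by (auto simp: monomials_of_degree_def homog_part_def intro: in_vars_monomial homog_monomial)
  show "homog_part (Suc n) d \<subseteq> cpoly.span (monomial ` monomials_of_degree n d)"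
  proof
    fix f assume "f \<in> homog_part (Suc n) d"
    then have "keys f \<subseteq> monomials_of_degree n d"
      by (rule keys_homog_part)
    then have "(\<Sum>\<alpha>\<in>keys f. cscale (lookup f \<alpha>) (monomial \<alpha>))
                 \<in> cpoly.span (monomial ` monomials_of_degree n d)"
      by (intro cpoly.span_sum cpoly.span_scale cpoly.span_base) auto
    then show "f \<in> cpoly.span (monomial ` monomials_of_degree n d)"
      using poly_eq_sum_cscale_monomial[of f] by simp
  qed
qed (simp_all add: lookup_monomial)

context
  fixes p n :: nat and z :: "nat \<Rightarrow> complex"
  assumes p: "0 < p"
begin

lemma dim_homog_part_inter_Mideal:
  "cpoly.dim (homog_part (Suc n) d \<inter> Mideal p n z n)
     = card (monomials_of_degree n d - capped_monomials p n n d)"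
proof (rule dim_eq_card_if_lookup_diagonal)
  let ?A = "monomials_of_degree n d - capped_monomials p n n d"
  let ?v = "\<lambda>\<alpha>. monomial \<alpha> - monomial (reduce p n n \<alpha>)"
  have reduce_neq: "reduce p n n \<beta> \<noteq> \<alpha>" if "\<alpha> \<in> ?A" for \<alpha> \<beta>
    using that lookup_reduce_less[OF p order_refl]
    by (auto simp: capped_monomials_def monomials_of_degree_def lessThan_Suc)
  show "lookup (?v \<alpha>) \<alpha> = 1" if "\<alpha> \<in> ?A" for \<alpha>
    using reduce_neq[OF that] by (simp add: lookup_minus lookup_monomial)
  show "lookup (?v \<beta>) \<alpha> = 0" if "\<alpha> \<in> ?A" "\<beta> \<in> ?A" "\<beta> \<noteq> \<alpha>" for \<alpha> \<beta>
    using reduce_neq[OF that(1)] that(3) by (simp add: lookup_minus lookup_monomial)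
  show "?v ` ?A \<subseteq> homog_part (Suc n) d \<inter> Mideal p n z n"
  proof
    fix v assume "v \<in> ?v ` ?A"
    then obtain \<alpha> where \<alpha>: "keys \<alpha> \<subseteq> {..<Suc n}" "mdeg \<alpha> = d" "v = ?v \<alpha>"
      by (auto simp: monomials_of_degree_def)
    moreover have "keys (reduce p n n \<alpha>) \<subseteq> {..<Suc n}"
      using keys_reduce[OF order_refl \<alpha>(1)] .
    ultimately show "v \<in> homog_part (Suc n) d \<inter> Mideal p n z n"
      by (auto simp: homog_part_def mdeg_reduce
          intro!: in_vars_diff in_vars_monomial homog_diff homog_monomial
          monomial_diff_reduce_in_Mideal[OF p])
  qed
  show "homog_part (Suc n) d \<inter> Mideal p n z n \<subseteq> cpoly.span (?v ` ?A)"
  proof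
    fix f assume f: "f \<in> homog_part (Suc n) d \<inter> Mideal p n z n"
    then have "in_vars (Suc n) f" by (simp add: homog_part_def)
    then have "reduce_poly p n n f = 0"
      using f Mideal_iff_root_substs_vanish[OF p order_refl]
        reduce_poly_eq_0_if_root_substs_vanish[OF p order_refl] by blast
    then have "f = (\<Sum>\<alpha>\<in>keys f. cscale (lookup f \<alpha>) (?v \<alpha>))"
      using poly_diff_reduce_poly[of f p n n] by (simp add: cscale_eq_pconst_mult)
    also have "\<dots> \<in> cpoly.span (?v ` ?A)"
    proof (intro cpoly.span_sum cpoly.span_scale)
      fix \<alpha> assume "\<alpha> \<in> keys f"
      then have "\<alpha> \<in> monomials_of_degree n d" using f keys_homog_part by blast
      then show "?v \<alpha> \<in> cpoly.span (?v ` ?A)"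
        by (cases "\<alpha> \<in> capped_monomials p n n d")
          (auto simp: capped_monomials_def reduce_eq_self cpoly.span_zero intro: cpoly.span_base)
    qed
    finally show "f \<in> cpoly.span (?v ` ?A)" .
  qed
qed

lemma quot_dim_Mideal: "quot_dim (Suc n) (Mideal p n z n) d = card (capped_monomials p n n d)"
proof -
  have "finite (capped_monomials p n n d)"
    using capped_monomials_subset finite_monomials_of_degree by (rule finite_subset)
  then show ?thesis
    using capped_monomials_subset finite_monomials_of_degree
    by (simp add: quot_dim_def dim_homog_part dim_homog_part_inter_Mideal card_Diff_subset
        card_mono diff_diff_cancel)
qed

end

unbundle fps_syntax

lemma finite_capped_monomials: "finite (capped_monomials p n k d)"
proof -
  have "capped_monomials p n k d \<subseteq> {\<alpha>. keys \<alpha> \<subseteq> insert n {..<k} \<and> mdeg \<alpha> = d}"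
    by (auto simp: capped_monomials_def)
  then show ?thesis by (rule finite_subset) (intro finite_exponents_of_mdeg, simp)
qed

lemma capped_monomials_0: "capped_monomials p n 0 d = {single n d}"
proof
  show "capped_monomials p n 0 d \<subseteq> {single n d}"
  proof
    fix \<alpha> assume \<alpha>: "\<alpha> \<in> capped_monomials p n 0 d"
    have "\<alpha> = single n (lookup \<alpha> n)"
      using \<alpha> by (intro poly_mapping_eqI) (auto simp: capped_monomials_def lookup_single when_def in_keys_iff)
    moreover have "mdeg \<alpha> = d"
      using \<alpha> by (simp add: capped_monomials_def)
    ultimately show "\<alpha> \<in> {single n d}"
      by (metis mdeg_single singletonI)
  qed
qed (auto simp: capped_monomials_def)

lemma lookup_capped_monomials_eq_0: "\<beta> \<in> capped_monomials p n k d \<Longrightarrow> k \<noteq> n \<Longrightarrow> lookup \<beta> k = 0"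
  by (auto simp: capped_monomials_def in_keys_iff)

lemma capped_monomials_Suc:
  assumes "k < n"
  shows "capped_monomials p n (Suc k) d
           = (\<Union>a\<in>{a\<in>{0..d}. a < p}. (\<lambda>\<beta>. \<beta> + single k a) ` capped_monomials p n k (d - a))"
proof (intro equalityI subsetI)
  fix \<alpha> assume \<alpha>: "\<alpha> \<in> capped_monomials p n (Suc k) d"
  let ?a = "lookup \<alpha> k"
  let ?\<beta> = "Poly_Mapping.update k 0 \<alpha>"
  have \<alpha>_eq: "\<alpha> = ?\<beta> + single k ?a"
    by (rule poly_mapping_eqI) (simp add: lookup_add lookup_update lookup_single when_def)
  then have "mdeg \<alpha> = mdeg (?\<beta> + single k ?a)"
    by (rule arg_cong)
  then have "mdeg \<alpha> = mdeg ?\<beta> + ?a"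
    by (simp only: mdeg_add mdeg_single)
  then have "mdeg ?\<beta> + ?a = d"
    using \<alpha> by (simp add: capped_monomials_def)
  then have "?\<beta> \<in> capped_monomials p n k (d - ?a)"
    using \<alpha> assms by (auto simp: capped_monomials_def keys_update lookup_update)
  moreover have "?a \<in> {a\<in>{0..d}. a < p}"
    using \<alpha> lookup_le_mdeg[of \<alpha> k] by (simp add: capped_monomials_def)
  ultimately show "\<alpha> \<in> (\<Union>a\<in>{a\<in>{0..d}. a < p}. (\<lambda>\<beta>. \<beta> + single k a) ` capped_monomials p n k (d - a))"
    using \<alpha>_eq by blast
next
  fix \<alpha> assume "\<alpha> \<in> (\<Union>a\<in>{a\<in>{0..d}. a < p}. (\<lambda>\<beta>. \<beta> + single k a) ` capped_monomials p n k (d - a))"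
  then obtain a \<beta> where a: "a \<le> d" "a < p" and \<beta>: "\<beta> \<in> capped_monomials p n k (d - a)"
    and \<alpha>: "\<alpha> = \<beta> + single k a" by auto
  have "lookup \<beta> k = 0"
    using lookup_capped_monomials_eq_0[OF \<beta>] assms by simp
  then show "\<alpha> \<in> capped_monomials p n (Suc k) d"
    using a \<beta> unfolding \<alpha>
    by (auto simp: capped_monomials_def keys_add_exponents mdeg_add lookup_add lookup_single when_def
        less_Suc_eq)
qed

lemma card_capped_monomials_Suc:
  assumes "k < n"
  shows "card (capped_monomials p n (Suc k) d)
           = (\<Sum>a\<in>{a\<in>{0..d}. a < p}. card (capped_monomials p n k (d - a)))"
proof -
  let ?S = "\<lambda>a. (\<lambda>\<beta>. \<beta> + single k a) ` capped_monomials p n k (d - a)"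
  have exponent: "lookup (\<beta> + single k a) k = a" if "\<beta> \<in> capped_monomials p n k e" for \<beta> a e
    using lookup_capped_monomials_eq_0[OF that] assms by (simp add: lookup_add)
  have "?S a \<inter> ?S b = {}" if "a \<noteq> b" for a b
  proof -
    have "a = b" if \<gamma>: "\<gamma> \<in> ?S a \<inter> ?S b" for \<gamma>
    proof -
      obtain \<beta> \<beta>' where \<beta>: "\<beta> \<in> capped_monomials p n k (d - a)"
        and \<beta>': "\<beta>' \<in> capped_monomials p n k (d - b)"
        and "\<gamma> = \<beta> + single k a" "\<gamma> = \<beta>' + single k b"
        using \<gamma> by blast
      then show ?thesis using exponent[OF \<beta>, of a] exponent[OF \<beta>', of b] by simp
    qed
    then show ?thesis using \<open>a \<noteq> b\<close> by blast
  qed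
  moreover have "inj_on (\<lambda>\<beta>. \<beta> + single k a) (B :: (nat \<Rightarrow>\<^sub>0 nat) set)" for a B
    by (rule inj_onI) simp
  ultimately show ?thesis
    unfolding capped_monomials_Suc[OF assms]
    by (subst card_UN_disjoint) (simp_all add: finite_capped_monomials card_image)
qed

lemma fps_nth_sum_X_power: "(\<Sum>i<p. fps_X ^ i :: 'a::comm_ring_1 fps) $ j = (if j < p then 1 else 0)"
  by (simp add: fps_sum_nth)

lemma fps_nth_capped_monomials:
  "k \<le> n \<Longrightarrow> ((\<Sum>i<p. fps_X ^ i) ^ k * Abs_fps (\<lambda>_. 1 :: rat)) $ d
                = of_nat (card (capped_monomials p n k d))"
proof (induction k arbitrary: d)
  case 0
  then show ?case by (simp add: capped_monomials_0)
next
  case (Suc k)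
  have "((\<Sum>i<p. fps_X ^ i) ^ Suc k * Abs_fps (\<lambda>_. 1 :: rat)) $ d
          = (\<Sum>j=0..d. (\<Sum>i<p. fps_X ^ i) $ j * ((\<Sum>i<p. fps_X ^ i) ^ k * Abs_fps (\<lambda>_. 1)) $ (d - j))"
    by (simp add: mult.assoc fps_mult_nth)
  also have "\<dots> = (\<Sum>j\<in>{0..d}. if j < p then of_nat (card (capped_monomials p n k (d - j))) else 0)"
    using Suc by (intro sum.cong) (simp_all add: fps_nth_sum_X_power)
  also have "\<dots> = (\<Sum>j\<in>{a\<in>{0..d}. a < p}. of_nat (card (capped_monomials p n k (d - j))))"
    by (rule sum.inter_filter[symmetric]) simp
  also have "\<dots> = of_nat (card (capped_monomials p n (Suc k) d))"
    using Suc by (simp add: card_capped_monomials_Suc)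
  finally show ?case .
qed

lemma rcoef_eq_fps_nth: "rcoef p (Suc n) d = ((\<Sum>i<p. fps_X ^ i) ^ n * Abs_fps (\<lambda>_. 1)) $ d"
proof -
  have "Abs_fps (\<lambda>_. 1 :: rat) * inverse (Abs_fps (\<lambda>_. 1)) = 1"
    by (rule inverse_mult_eq_1') simp
  then have ones: "(1 - fps_X) * Abs_fps (\<lambda>_. 1 :: rat) = 1"
    by (simp add: fps_inverse_gp' mult.commute)
  have "(1 - fps_X :: rat fps) \<noteq> 0"
    by (metis fps_one_nth fps_X_nth fps_sub_nth zero_neq_one diff_zero fps_zero_nth)
  have "((\<Sum>i<p. fps_X ^ i) ^ n * Abs_fps (\<lambda>_. 1)) * (1 - fps_X :: rat fps) ^ Suc n
          = ((1 - fps_X) * (\<Sum>i<p. fps_X ^ i)) ^ n * ((1 - fps_X) * Abs_fps (\<lambda>_. 1))"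
    by (simp only: power_mult_distrib power_Suc mult_ac)
  also have "\<dots> = (1 - fps_X ^ p) ^ n"
    by (simp add: ones one_diff_power_eq)
  finally have "(1 - fps_X ^ p) ^ n / (1 - fps_X :: rat fps) ^ Suc n
                  = (\<Sum>i<p. fps_X ^ i) ^ n * Abs_fps (\<lambda>_. 1)"
    using \<open>1 - fps_X \<noteq> 0\<close> by (metis nonzero_mult_div_cancel_right power_not_zero)
  then show ?thesis
    by (simp add: rcoef_def)
qed

lemma card_capped_monomials_eq_rcoef: "of_nat (card (capped_monomials p n n d)) = rcoef p (Suc n) d"
  using fps_nth_capped_monomials[of n n p d] by (simp add: rcoef_eq_fps_nth)

theorem mainTheorem11:
  fixes p m :: nat and z0 :: "nat \<Rightarrow> complex"
  assumes "p \<ge> 1" and "m \<ge> 1"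
    and "(\<Prod>j<m. z0 j) * Rval p m z0 \<noteq> 0"
  shows "regular_sequence m (Mbars p m z0)
         \<and> homog p (Mbar p m z0 (m - 1))
         \<and> (\<forall>f. in_vars m f \<and> f * Mbar p m z0 (m - 1) \<in> gen_ideal m (take (m - 1) (Mbars p m z0))
                \<longrightarrow> f \<in> gen_ideal m (take (m - 1) (Mbars p m z0)))
         \<and> (\<forall>d. of_nat (quot_dim m (gen_ideal m (take (m - 1) (Mbars p m z0))) d) = rcoef p m d)"
proof -
  obtain n where m: "m = Suc n"
    using assms(2) by (cases m) auto
  have p: "0 < p"
    using assms(1) by simp
  have R: "Rval p (Suc n) z0 \<noteq> 0"
    using assms(3) m by simp
  show ?thesis
    using regular_sequence_Mbars[OF p R] homog_Mbar in_Mideal_if_mult_Mbar_in_Mideal[OF p R order_refl]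
      quot_dim_Mideal[OF p] card_capped_monomials_eq_rcoef m
    by simp
qed

end
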